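(* Let $q$ be a prime power not divisible by $2$ or $3$, let $t\in\mathbb{F}_q$ with $t\ne0,1$, let $f(x)=x^3+3x^2-4t$ and let $N_f(t)$ be the number of zeros of $f$ in $\mathbb{F}_q$. Then $N_f(t)=1+H_q(t)$, where $H_q$ is the hypergeometric sum with parameters $\boldsymbol\alpha=(1/3,2/3)$, $\boldsymbol\beta=(1,1/2)$.
   Context: Fix a nontrivial additive character $\psi_q$ of $\mathbb{F}_q$, a generator $\omega$ of the character group of $\mathbb{F}_q^\times$, and $g(m)=\sum_{x\in\mathbb{F}_q^\times}\omega(x)^m\psi_q(x)$. Here, with $(p_1)=(3)$ and $(q_1,q_2)=(1,2)$ (so that $\frac{(X-e^{2\pi i/3})(X-e^{4\pi i/3})}{(X-1)(X+1)}=\frac{X^3-1}{(X-1)(X^2-1)}$), $H_q$ is defined by $$H_q(t)=\frac{(-1)^{3}}{1-q}\sum_{m=0}^{q-2}q^{s(m)-1}g(3m)g(-m)g(-2m)\,\omega(-\tfrac{4}{27}t)^m,$$ where $s(m)=1$ if $m\equiv0\pmod{q-1}$ and $s(m)=0$ otherwise. *)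

theory Defs
  imports Complex_Main
begin

text \<open>Finite field F_q is modelled by a type 'a of class {finite, field}; q = CARD('a).\<close>

definition nontriv_add_char :: "('a::{finite,field} \<Rightarrow> complex) \<Rightarrow> bool" where
  "nontriv_add_char psi \<longleftrightarrow>
     (\<forall>x y. psi (x + y) = psi x * psi y) \<and> (\<forall>x. psi x \<noteq> 0) \<and> (\<exists>x. psi x \<noteq> 1)"

text \<open>Generator of the character group of F_q^*: a homomorphism F_q^* to the nonzero complex
  numbers whose order in the character group is exactly q - 1 (its value at 0 is irrelevant).\<close>
definition mult_char_generator :: "('a::{finite,field} \<Rightarrow> complex) \<Rightarrow> bool" where
  "mult_char_generator omega \<longleftrightarrow>
     (\<forall>x y. x \<noteq> 0 \<longrightarrow> y \<noteq> 0 \<longrightarrow> omega (x * y) = omega x * omega y) \<and>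
     (\<forall>x. x \<noteq> 0 \<longrightarrow> omega x \<noteq> 0) \<and>
     (\<forall>k::nat. 0 < k \<and> k < card (UNIV::'a set) - 1 \<longrightarrow> (\<exists>x. x \<noteq> 0 \<and> omega x ^ k \<noteq> 1))"

definition gauss_sum :: "('a::{finite,field} \<Rightarrow> complex) \<Rightarrow> ('a \<Rightarrow> complex) \<Rightarrow> int \<Rightarrow> complex" where
  "gauss_sum psi omega m = (\<Sum>x\<in>{x::'a. x \<noteq> 0}. omega x powi m * psi x)"

definition s_fun :: "nat \<Rightarrow> nat \<Rightarrow> int" where
  "s_fun q m = (if (q - 1) dvd m then 1 else 0)"

text \<open>The hypergeometric sum H_q(t) for alpha = (1/3,2/3), beta = (1,1/2).\<close>
definition H_q :: "('a::{finite,field} \<Rightarrow> complex) \<Rightarrow> ('a \<Rightarrow> complex) \<Rightarrow> 'a \<Rightarrow> complex" where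
  "H_q psi omega t =
     (let q = card (UNIV::'a set); g = gauss_sum psi omega in
      ((-1) ^ 3 / (1 - of_nat q)) *
      (\<Sum>m\<in>{0..q - 2}. (of_nat q) powi (s_fun q m - 1) *
          g (3 * int m) * g (- int m) * g (- 2 * int m) *
          omega (- (4 / 27) * t) ^ m))"

end

theory Submission
  imports Defs "HOL-Library.Cardinality" "HOL-Number_Theory.Residues"
begin

text \<open>Expanding the three Gauss sums, the sum over \<open>m\<close> of
  \<open>g(3m) g(-m) g(-2m) \<omega>(a)\<^sup>m\<close> with \<open>a = -4t/27\<close> collapses by orthogonality of
  multiplicative characters to \<open>(q-1) \<Sum>\<^sub>x\<^sub>,\<^sub>z \<psi>(x + a x\<^sup>3/z\<^sup>2 + z)\<close>. The substitution
  \<open>x = z u\<close> and orthogonality of additive characters turn this into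
  \<open>(q-1)(q R - (q-1))\<close>, where \<open>R\<close> counts the roots of \<open>a u\<^sup>3 + u + 1\<close>; the weights
  \<open>q\<^bsup>s(m)-1\<^esup>\<close> then give \<open>H\<^sub>q(t) = R - 1\<close>. Finally \<open>x \<mapsto> 3/x\<close> maps the roots of
  \<open>x\<^sup>3 + 3x\<^sup>2 - 4t\<close> bijectively onto those of \<open>a u\<^sup>3 + u + 1\<close>.\<close>

lemma card_nonzero: "card {x::'a::{finite,zero}. x \<noteq> 0} = CARD('a) - 1"
proof -
  have "{x::'a. x \<noteq> 0} = UNIV - {0}" by auto
  thus ?thesis by (simp add: card_Diff_subset)
qed

lemma of_nat_prime_neq_zero:
  assumes "prime p" "\<not> p dvd CARD('a::{finite,field})"
  shows "(of_nat p :: 'a) \<noteq> 0"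
proof
  assume "(of_nat p :: 'a) = 0"
  hence "CHAR('a) dvd p" by (simp add: of_nat_eq_0_iff_char_dvd)
  hence "CHAR('a) = p" using assms(1) CHAR_not_1 by (auto simp: prime_nat_iff)
  with CHAR_dvd_CARD[where 'a='a] assms(2) show False by simp
qed

lemma power_card_eq_one_if_mult_closed:
  fixes S :: "'b::field set"
  assumes "finite S" "0 \<notin> S" "\<And>x y. x \<in> S \<Longrightarrow> y \<in> S \<Longrightarrow> x * y \<in> S" "z \<in> S"
  shows "z ^ card S = 1"
proof -
  have inj: "inj_on ((*) z) S" using assms by (auto simp: inj_on_def)
  have "(*) z ` S = S"
    using assms card_image[OF inj] by (intro card_subset_eq) auto
  hence "\<Prod>S = (\<Prod>y\<in>S. z * y)" using prod.reindex[OF inj] by simp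
  also have "\<dots> = z ^ card S * \<Prod>S" by (simp add: prod.distrib)
  finally show ?thesis using assms by simp
qed

lemma mult_char_one:
  fixes omega :: "'a::{finite,field} \<Rightarrow> complex"
  assumes "mult_char_generator omega"
  shows "omega 1 = 1"
proof -
  have "omega (1 * 1) = omega 1 * omega 1" "omega 1 \<noteq> 0"
    using assms one_neq_zero unfolding mult_char_generator_def by blast+
  thus ?thesis by simp
qed

lemma mult_char_divide:
  fixes omega :: "'a::{finite,field} \<Rightarrow> complex"
  assumes "mult_char_generator omega" "x \<noteq> 0" "y \<noteq> 0"
  shows "omega (x / y) = omega x / omega y"
proof -
  have "omega (x / y) * omega y = omega x"
    using assms unfolding mult_char_generator_def by (metis divide_eq_0_iff nonzero_divide_eq_eq)
  thus ?thesis using assms unfolding mult_char_generator_def by (simp add: field_simps)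
qed

lemma mult_char_power:
  fixes omega :: "'a::{finite,field} \<Rightarrow> complex"
  assumes "mult_char_generator omega" "x \<noteq> 0"
  shows "omega (x ^ n) = omega x ^ n"
  using assms(2) by (induction n) (use assms(1) in \<open>auto simp: mult_char_one mult_char_generator_def\<close>)

text \<open>The image of \<open>F\<^sub>q\<^sup>*\<close> under a character is a finite subgroup of \<open>\<complex>\<^sup>*\<close>, so its
  order kills \<open>omega\<close>; a generator has order \<open>q - 1\<close>, which forces \<open>omega\<close> to be injective.\<close>
lemma mult_char_generator_eq_one_iff:
  fixes omega :: "'a::{finite,field} \<Rightarrow> complex"
  assumes om: "mult_char_generator omega" and "w \<noteq> 0"
  shows "omega w = 1 \<longleftrightarrow> w = 1"
proof
  assume w: "omega w = 1"
  define U where "U = {x::'a. x \<noteq> 0}"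
  have mul: "\<And>x y. x \<noteq> 0 \<Longrightarrow> y \<noteq> 0 \<Longrightarrow> omega (x * y) = omega x * omega y"
   and nz: "\<And>x. x \<noteq> 0 \<Longrightarrow> omega x \<noteq> 0"
   and gen: "\<And>k. 0 < k \<Longrightarrow> k < CARD('a) - 1 \<Longrightarrow> \<exists>x. x \<noteq> 0 \<and> omega x ^ k \<noteq> 1"
    using om unfolding mult_char_generator_def by blast+
  have "omega x ^ card (omega ` U) = 1" if "x \<noteq> 0" for x
  proof (rule power_card_eq_one_if_mult_closed)
    show "\<And>a b. a \<in> omega ` U \<Longrightarrow> b \<in> omega ` U \<Longrightarrow> a * b \<in> omega ` U"
      using mul unfolding U_def by (force simp flip: mul)
  qed (use that nz in \<open>auto simp: U_def\<close>)
  moreover have "0 < card (omega ` U)" by (auto simp: U_def card_gt_0_iff intro: exI[of _ 1])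
  ultimately have "\<not> card (omega ` U) < card U"
    using gen by (auto simp: U_def card_nonzero)
  hence "inj_on omega U"
    using card_image_le[of U omega] by (simp add: inj_on_iff_eq_card U_def)
  moreover have "omega w = omega 1" "w \<in> U" "1 \<in> U"
    using w assms(2) mult_char_one[OF om] by (auto simp: U_def)
  ultimately show "w = 1" by (rule inj_onD)
next
  show "w = 1 \<Longrightarrow> omega w = 1" using mult_char_one[OF om] by simp
qed

lemma sum_mult_char_powers:
  fixes omega :: "'a::{finite,field} \<Rightarrow> complex"
  assumes om: "mult_char_generator omega" and w: "w \<noteq> 0"
  shows "(\<Sum>m<CARD('a) - 1. omega w ^ m) = (if w = 1 then of_nat (CARD('a) - 1) else 0)"
proof (cases "w = 1")
  case False
  have "w ^ (CARD('a) - 1) = 1"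
    using power_card_eq_one_if_mult_closed[of "{x::'a. x \<noteq> 0}" w] w by (simp add: card_nonzero)
  hence "omega w ^ (CARD('a) - 1) = 1"
    by (simp add: mult_char_one[OF om] flip: mult_char_power[OF om w])
  thus ?thesis
    using False mult_char_generator_eq_one_iff[OF assms] by (simp add: sum_gp_strict)
qed (simp add: mult_char_one[OF om])

lemma add_char_zero:
  fixes psi :: "'a::{finite,field} \<Rightarrow> complex"
  assumes "nontriv_add_char psi"
  shows "psi 0 = 1"
  using assms unfolding nontriv_add_char_def by (metis add_0 mult_cancel_right2)

lemma sum_add_char:
  fixes psi :: "'a::{finite,field} \<Rightarrow> complex"
  assumes ps: "nontriv_add_char psi"
  shows "(\<Sum>x\<in>UNIV. psi x) = 0"
proof -
  obtain c where c: "psi c \<noteq> 1" using ps unfolding nontriv_add_char_def by blast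
  have "(\<Sum>x\<in>UNIV. psi x) = (\<Sum>x\<in>UNIV. psi (x + c))"
    by (rule sum.reindex_bij_witness[where j="\<lambda>x. x - c" and i="\<lambda>x. x + c"]) auto
  also have "\<dots> = psi c * (\<Sum>x\<in>UNIV. psi x)"
    using ps by (simp add: nontriv_add_char_def sum_distrib_left mult.commute)
  finally show ?thesis using c by (metis mult_cancel_right2)
qed

lemma sum_add_char_scaled:
  fixes psi :: "'a::{finite,field} \<Rightarrow> complex"
  assumes ps: "nontriv_add_char psi"
  shows "(\<Sum>z | z \<noteq> 0. psi (z * c)) = (if c = 0 then of_nat (CARD('a) - 1) else -1)"
proof (cases "c = 0")
  case False
  have "(\<Sum>z | z \<noteq> 0. psi (z * c)) = (\<Sum>x | x \<noteq> 0. psi x)"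
    by (rule sum.reindex_bij_witness[where i="\<lambda>x. x / c" and j="\<lambda>x. x * c"]) (use False in auto)
  also have "\<dots> = (\<Sum>x\<in>UNIV - {0}. psi x)"
    by (rule sum.cong) auto
  also have "\<dots> = (\<Sum>x\<in>UNIV. psi x) - psi 0"
    by (simp add: sum_diff1)
  finally show ?thesis using False sum_add_char[OF ps] add_char_zero[OF ps] by simp
qed (simp add: add_char_zero[OF ps] card_nonzero)

lemma gauss_sum_of_nat:
  "gauss_sum psi omega (int k) = (\<Sum>x | x \<noteq> 0. omega x ^ k * psi x)"
  by (simp add: gauss_sum_def)

lemma gauss_sum_minus_of_nat:
  "gauss_sum psi omega (- int k) = (\<Sum>x | x \<noteq> 0. inverse (omega x) ^ k * psi x)"
  by (simp add: gauss_sum_def power_int_minus power_inverse)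

lemma gauss_sum_zero:
  fixes psi omega :: "'a::{finite,field} \<Rightarrow> complex"
  assumes "nontriv_add_char psi"
  shows "gauss_sum psi omega 0 = -1"
  using sum_add_char_scaled[OF assms, of 1] by (simp add: gauss_sum_def)

lemma gauss_sum_triple_product:
  fixes psi omega :: "'a::{finite,field} \<Rightarrow> complex"
  assumes ps: "nontriv_add_char psi" and om: "mult_char_generator omega" and a: "a \<noteq> 0"
  shows "gauss_sum psi omega (3 * int m) * gauss_sum psi omega (- int m)
           * gauss_sum psi omega (- 2 * int m) * omega a ^ m
         = (\<Sum>x | x \<noteq> 0. \<Sum>z | z \<noteq> 0. \<Sum>y | y \<noteq> 0.
              omega (a * x ^ 3 / (y * z ^ 2)) ^ m * psi (x + y + z))"
proof -
  have exponents: "3 * int m = int (3 * m)" "- 2 * int m = - int (2 * m)" by simp_all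
  have "gauss_sum psi omega (3 * int m) * gauss_sum psi omega (- int m)
          * gauss_sum psi omega (- 2 * int m) * omega a ^ m
      = (\<Sum>x | x \<noteq> 0. omega x ^ (3 * m) * psi x) * (\<Sum>y | y \<noteq> 0. inverse (omega y) ^ m * psi y)
          * (\<Sum>z | z \<noteq> 0. inverse (omega z) ^ (2 * m) * psi z) * omega a ^ m"
    unfolding exponents gauss_sum_of_nat gauss_sum_minus_of_nat ..
  also have "\<dots> = (\<Sum>x | x \<noteq> 0. \<Sum>z | z \<noteq> 0. \<Sum>y | y \<noteq> 0.
      omega x ^ (3 * m) * psi x * (inverse (omega y) ^ m * psi y)
        * (inverse (omega z) ^ (2 * m) * psi z) * omega a ^ m)"
    by (subst sum.swap[where B = "{y. y \<noteq> 0}"])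
       (simp add: sum_distrib_left sum_distrib_right mult_ac)
  also have "\<dots> = (\<Sum>x | x \<noteq> 0. \<Sum>z | z \<noteq> 0. \<Sum>y | y \<noteq> 0.
      omega (a * x ^ 3 / (y * z ^ 2)) ^ m * psi (x + y + z))"
  proof (intro sum.cong refl)
    fix x y z :: 'a assume "x \<in> {x. x \<noteq> 0}" "y \<in> {y. y \<noteq> 0}" "z \<in> {z. z \<noteq> 0}"
    hence "omega (a * x ^ 3 / (y * z ^ 2)) = omega a * omega x ^ 3 / (omega y * omega z ^ 2)"
      using om a unfolding mult_char_generator_def
      by (simp add: mult_char_divide[OF om] mult_char_power[OF om])
    moreover have "psi (x + y + z) = psi x * psi y * psi z"
      using ps unfolding nontriv_add_char_def by simp
    ultimately show "omega x ^ (3 * m) * psi x * (inverse (omega y) ^ m * psi y)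
        * (inverse (omega z) ^ (2 * m) * psi z) * omega a ^ m
      = omega (a * x ^ 3 / (y * z ^ 2)) ^ m * psi (x + y + z)"
      by (simp add: power_mult_distrib power_divide power_mult[symmetric] divide_inverse
            power_inverse mult_ac)
  qed
  finally show ?thesis .
qed

lemma sum_gauss_sum_triple_products:
  fixes psi omega :: "'a::{finite,field} \<Rightarrow> complex"
  assumes ps: "nontriv_add_char psi" and om: "mult_char_generator omega" and a: "a \<noteq> 0"
  shows "(\<Sum>m<CARD('a) - 1. gauss_sum psi omega (3 * int m) * gauss_sum psi omega (- int m)
           * gauss_sum psi omega (- 2 * int m) * omega a ^ m)
         = of_nat (CARD('a) - 1) * (\<Sum>x | x \<noteq> 0. \<Sum>z | z \<noteq> 0. psi (x + a * x ^ 3 / z ^ 2 + z))"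
proof -
  have inner: "(\<Sum>y | y \<noteq> 0. \<Sum>m<CARD('a) - 1. omega (a * x ^ 3 / (y * z ^ 2)) ^ m * psi (x + y + z))
      = of_nat (CARD('a) - 1) * psi (x + a * x ^ 3 / z ^ 2 + z)"
    if "x \<noteq> 0" "z \<noteq> 0" for x z
  proof -
    define c where "c = a * x ^ 3 / z ^ 2"
    have "(\<Sum>m<CARD('a) - 1. omega (a * x ^ 3 / (y * z ^ 2)) ^ m * psi (x + y + z))
        = (if y = c then of_nat (CARD('a) - 1) * psi (x + c + z) else 0)" if "y \<noteq> 0" for y
    proof -
      have "a * x ^ 3 / (y * z ^ 2) = 1 \<longleftrightarrow> y = c"
        using \<open>x \<noteq> 0\<close> \<open>z \<noteq> 0\<close> \<open>y \<noteq> 0\<close> by (auto simp: c_def field_simps)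
      thus ?thesis
        using sum_mult_char_powers[OF om, of "a * x ^ 3 / (y * z ^ 2)"] \<open>x \<noteq> 0\<close> \<open>z \<noteq> 0\<close> \<open>y \<noteq> 0\<close> a
        by (auto simp flip: sum_distrib_right)
    qed
    moreover have "c \<noteq> 0" using that a by (simp add: c_def)
    ultimately show ?thesis by (simp add: c_def)
  qed
  have "(\<Sum>m<CARD('a) - 1. gauss_sum psi omega (3 * int m) * gauss_sum psi omega (- int m)
           * gauss_sum psi omega (- 2 * int m) * omega a ^ m)
      = (\<Sum>x | x \<noteq> 0. \<Sum>z | z \<noteq> 0. \<Sum>y | y \<noteq> 0. \<Sum>m<CARD('a) - 1.
           omega (a * x ^ 3 / (y * z ^ 2)) ^ m * psi (x + y + z))"
    unfolding gauss_sum_triple_product[OF ps om a] by (simp only: sum.swap[where A = "{..<_}"])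
  also have "\<dots> = (\<Sum>x | x \<noteq> 0. \<Sum>z | z \<noteq> 0.
      of_nat (CARD('a) - 1) * psi (x + a * x ^ 3 / z ^ 2 + z))"
    by (intro sum.cong refl inner) auto
  finally show ?thesis by (simp add: sum_distrib_left)
qed

lemma sum_add_char_cubic_phase:
  fixes psi :: "'a::{finite,field} \<Rightarrow> complex"
  assumes ps: "nontriv_add_char psi"
  shows "(\<Sum>x | x \<noteq> 0. \<Sum>z | z \<noteq> 0. psi (x + a * x ^ 3 / z ^ 2 + z))
         = of_nat CARD('a) * of_nat (card {u. a * u ^ 3 + u + 1 = 0}) - of_nat (CARD('a) - 1)"
proof -
  define p where "p u = a * u ^ 3 + u + 1" for u :: 'a
  have substitution: "(\<Sum>x | x \<noteq> 0. psi (x + a * x ^ 3 / z ^ 2 + z)) = (\<Sum>u | u \<noteq> 0. psi (z * p u))"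
    if "z \<noteq> 0" for z
  proof (rule sum.reindex_bij_witness[where i="\<lambda>u. u * z" and j="\<lambda>x. x / z"])
    fix x :: 'a
    have "z * p (x / z) = x + a * x ^ 3 / z ^ 2 + z"
      using that by (simp add: p_def field_simps power2_eq_square power3_eq_cube)
    thus "psi (z * p (x / z)) = psi (x + a * x ^ 3 / z ^ 2 + z)" by simp
  qed (use that in auto)
  have "(\<Sum>x | x \<noteq> 0. \<Sum>z | z \<noteq> 0. psi (x + a * x ^ 3 / z ^ 2 + z))
      = (\<Sum>z | z \<noteq> 0. \<Sum>x | x \<noteq> 0. psi (x + a * x ^ 3 / z ^ 2 + z))"
    by (rule sum.swap)
  also have "\<dots> = (\<Sum>z | z \<noteq> 0. \<Sum>u | u \<noteq> 0. psi (z * p u))"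
    by (rule sum.cong[OF refl], rule substitution) simp
  also have "\<dots> = (\<Sum>u | u \<noteq> 0. \<Sum>z | z \<noteq> 0. psi (z * p u))"
    by (rule sum.swap)
  also have "\<dots> = (\<Sum>u | u \<noteq> 0. (if p u = 0 then of_nat CARD('a) else 0) - 1)"
    using sum_add_char_scaled[OF ps] by (intro sum.cong refl) (simp add: of_nat_diff)
  also have "\<dots> = of_nat CARD('a) * of_nat (card {u. u \<noteq> 0 \<and> p u = 0}) - of_nat (CARD('a) - 1)"
    by (simp add: sum_subtractf sum.If_cases card_nonzero Int_def conj_commute)
  also have "{u. u \<noteq> 0 \<and> p u = 0} = {u. a * u ^ 3 + u + 1 = 0}"
    by (auto simp: p_def)
  finally show ?thesis .
qed

lemma sum_s_fun_weights:
  fixes X :: "nat \<Rightarrow> 'b::field_char_0"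
  assumes "q \<ge> 2"
  shows "(\<Sum>m\<in>{0..q - 2}. of_nat q powi (s_fun q m - 1) * X m)
         = (\<Sum>m<q - 1. X m) / of_nat q + (1 - 1 / of_nat q) * X 0"
proof -
  have "(\<Sum>m\<in>{0..q - 2}. of_nat q powi (s_fun q m - 1) * X m)
      = (\<Sum>m<q - 1. X m / of_nat q + (if m = 0 then (1 - 1 / of_nat q) * X 0 else 0))"
  proof (rule sum.cong)
    show "{0..q - 2} = {..<q - 1}" using assms by auto
  next
    fix m assume "m \<in> {..<q - 1}"
    hence "(q - 1) dvd m \<longleftrightarrow> m = 0" by (auto dest: dvd_imp_le)
    thus "of_nat q powi (s_fun q m - 1) * X m
        = X m / of_nat q + (if m = 0 then (1 - 1 / of_nat q) * X 0 else 0)"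
      using assms by (simp add: s_fun_def power_int_minus field_simps)
  qed
  also have "\<dots> = (\<Sum>m<q - 1. X m) / of_nat q + (1 - 1 / of_nat q) * X 0"
    using assms by (simp add: sum.distrib sum_divide_distrib)
  finally show ?thesis .
qed

lemma H_q_eq_card_cubic_roots:
  fixes psi omega :: "'a::{finite,field} \<Rightarrow> complex"
  assumes ps: "nontriv_add_char psi" and om: "mult_char_generator omega"
    and a: "- (4 / 27) * t \<noteq> 0"
  shows "H_q psi omega t = of_nat (card {u. - (4 / 27) * t * u ^ 3 + u + 1 = 0}) - 1"
proof -
  define q :: complex where "q = of_nat CARD('a)"
  define R :: complex where "R = of_nat (card {u. - (4 / 27) * t * u ^ 3 + u + 1 = 0})"
  define X where "X m = gauss_sum psi omega (3 * int m) * gauss_sum psi omega (- int m)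
      * gauss_sum psi omega (- 2 * int m) * omega (- (4 / 27) * t) ^ m" for m
  have card: "CARD('a) \<ge> 2" using card_mono[of UNIV "{0::'a, 1}"] by simp
  hence q: "q \<noteq> 0" "q \<noteq> 1" "of_nat (CARD('a) - 1) = q - 1" by (auto simp: q_def of_nat_diff)
  have "H_q psi omega t = -1 / (1 - q)
      * (\<Sum>m\<in>{0..CARD('a) - 2}. q powi (s_fun CARD('a) m - 1) * X m)"
    unfolding H_q_def Let_def by (simp add: X_def q_def mult.assoc)
  also have "\<dots> = -1 / (1 - q) * ((\<Sum>m<CARD('a) - 1. X m) / q + (1 - 1 / q) * X 0)"
    by (simp only: sum_s_fun_weights[OF card, of X, folded q_def])
  also have "(\<Sum>m<CARD('a) - 1. X m) = (q - 1) * (q * R - (q - 1))"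
    unfolding X_def sum_gauss_sum_triple_products[OF ps om a] sum_add_char_cubic_phase[OF ps]
    by (simp only: q R_def q_def)
  also have "X 0 = -1" by (simp add: X_def gauss_sum_zero[OF ps])
  also have "-1 / (1 - q) * ((q - 1) * (q * R - (q - 1)) / q + (1 - 1 / q) * -1) = R - 1"
    using q by (simp add: field_simps)
  finally show ?thesis by (simp only: R_def)
qed

lemma card_roots_eq_card_reciprocal_roots:
  fixes t :: "'a::field"
  assumes three: "(3::'a) \<noteq> 0" and "4 * t \<noteq> 0"
  shows "card {x. x ^ 3 + 3 * x ^ 2 - 4 * t = 0} = card {u. - (4 / 27) * t * u ^ 3 + u + 1 = 0}"
proof -
  define P where "P x = x ^ 3 + 3 * x ^ 2 - 4 * t" for x :: 'a
  define Q where "Q u = - (4 / 27) * t * u ^ 3 + u + 1" for u :: 'a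
  have "(27::'a) = 3 ^ 3" by simp
  hence "(27::'a) \<noteq> 0" using three by (metis power_not_zero)
  hence key: "Q (3 / x) = P x / x ^ 3" if "x \<noteq> 0" for x
    using that by (simp add: P_def Q_def field_simps power2_eq_square power3_eq_cube)
  have P_root_nonzero: "x \<noteq> 0" if "P x = 0" for x
    using that assms(2) by (cases "x = 0") (simp_all add: P_def)
  have involution: "3 / (3 / x) = x" for x :: 'a using three by simp
  have "bij_betw (\<lambda>x. 3 / x) {x. P x = 0} {u. Q u = 0}"
  proof (rule bij_betw_byWitness[where f' = "\<lambda>u. 3 / u"])
    show "(\<lambda>x. 3 / x) ` {x. P x = 0} \<subseteq> {u. Q u = 0}"
      using key P_root_nonzero by auto
    show "(\<lambda>u. 3 / u) ` {u. Q u = 0} \<subseteq> {x. P x = 0}"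
    proof safe
      fix u assume "Q u = 0"
      hence "u \<noteq> 0" by (auto simp: Q_def)
      thus "P (3 / u) = 0"
        using key[of "3 / u"] \<open>Q u = 0\<close> three by (simp add: involution)
    qed
  qed (simp_all add: involution three)
  thus ?thesis unfolding P_def Q_def by (rule bij_betw_same_card)
qed

theorem mainTheorem3:
  fixes psi omega :: "'a::{finite,field} \<Rightarrow> complex" and t :: 'a
  assumes "\<not> 2 dvd card (UNIV::'a set)" and "\<not> 3 dvd card (UNIV::'a set)"
    and "nontriv_add_char psi" and "mult_char_generator omega"
    and "t \<noteq> 0" and "t \<noteq> 1"
  shows "complex_of_nat (card {x::'a. x ^ 3 + 3 * x ^ 2 - 4 * t = 0}) = 1 + H_q psi omega t"
proof -
  have two: "(2::'a) \<noteq> 0" and three: "(3::'a) \<noteq> 0"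
    using of_nat_prime_neq_zero[of 2] of_nat_prime_neq_zero[of 3] assms(1,2) by simp_all
  have "(4::'a) = 2 ^ 2" "(27::'a) = 3 ^ 3" by simp_all
  hence "(4::'a) \<noteq> 0" "(27::'a) \<noteq> 0" using two three by (metis power_not_zero)+
  hence "4 * t \<noteq> 0" "- (4 / 27) * t \<noteq> 0" using \<open>t \<noteq> 0\<close> by simp_all
  thus ?thesis
    using card_roots_eq_card_reciprocal_roots[OF three]
      H_q_eq_card_cubic_roots[OF assms(3,4)] by simp
qed

end
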